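(* There exists a directed set $\mathcal A$, which is not a cardinal number, with $\operatorname{card}(\mathcal A)=\operatorname{cov}(\mathcal N)$, such that $\mathcal{ANM}_{\mathcal A}\setminus\mathcal{ND}_{\mathcal A}$ is strongly $\mathfrak c$-algebrable in $\left(\mathbb R^{[0,1]}\right)^{\mathcal A}$.
   Context: A directed set is a nonempty set $\mathcal A$ with a reflexive transitive relation $\le$ in which any two elements have an upper bound; $x_A\to x$ if for each neighbourhood $U$ of $x$ there is $A_0$ with $x_A\in U$ for $A\ge A_0$. $\left(\mathbb R^{[0,1]}\right)^{\mathcal A}$ is the commutative real algebra of nets of functions $[0,1]\to\mathbb R$ with indexwise addition, indexwise pointwise multiplication and scalar multiplication. $\lambda$ is Lebesgue measure, $\mathcal N$ the null subsets of $[0,1]$, $\operatorname{cov}(\mathcal N)$ the least size of a subfamily of $\mathcal N$ covering $[0,1]$. $\mathcal{ANM}_{\mathcal A}$: nets of Lebesgue measurable $f_A:[0,1]\to\mathbb R$ converging a.e. to a measurable $f$ but not converging in measure to $f$. $\mathcal{ND}_{\mathcal A}$: nets of Lebesgue measurable $f_A:[0,1]\to\mathbb R$ with some integrable $g$ satisfying $|f_A|\le g$ a.e. for all $A$, $f_A\to f$ a.e. for some integrable $f$, and $\int|f_A-f|\,d\lambda\not\to0$. A subset $S$ of a commutative algebra is strongly $\kappa$-algebrable if there is a set $X$ of $\kappa$ algebraically independent elements (no nonzero polynomial without constant term vanishes at distinct elements of $X$) such that every nonzero element of the algebra generated by $X$ (values of polynomials without constant term at elements of $X$) belongs to $S$.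 *)

theory Defs
  imports "HOL-Analysis.Analysis" "HOL-Library.Equipollence"
begin

definition directed_set :: "'i set \<Rightarrow> ('i \<Rightarrow> 'i \<Rightarrow> bool) \<Rightarrow> bool" where
  "directed_set A le \<longleftrightarrow> A \<noteq> {} \<and> (\<forall>a\<in>A. le a a)
     \<and> (\<forall>a\<in>A. \<forall>b\<in>A. \<forall>c\<in>A. le a b \<longrightarrow> le b c \<longrightarrow> le a c)
     \<and> (\<forall>a\<in>A. \<forall>b\<in>A. \<exists>c\<in>A. le a c \<and> le b c)"

definition dir_rel :: "'i set \<Rightarrow> ('i \<Rightarrow> 'i \<Rightarrow> bool) \<Rightarrow> ('i \<times> 'i) set" where
  "dir_rel A le = {(a, b). a \<in> A \<and> b \<in> A \<and> le a b}"

definition net_tendsto :: "'i set \<Rightarrow> ('i \<Rightarrow> 'i \<Rightarrow> bool) \<Rightarrow> ('i \<Rightarrow> 'b::topological_space) \<Rightarrow> 'b \<Rightarrow> bool" where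
  "net_tendsto A le y l \<longleftrightarrow>
     (\<forall>U. open U \<and> l \<in> U \<longrightarrow> (\<exists>a0\<in>A. \<forall>a\<in>A. le a0 a \<longrightarrow> y a \<in> U))"

abbreviation lam01 :: "real measure" where
  "lam01 \<equiv> lebesgue_on {0..1}"

text \<open>cov(N): card A = cov(N) iff A is equipollent to a minimal-size family of
Lebesgue null subsets of [0,1] covering [0,1].\<close>
definition null_cover :: "real set set \<Rightarrow> bool" where
  "null_cover \<F> \<longleftrightarrow> (\<forall>N\<in>\<F>. N \<subseteq> {0..1} \<and> N \<in> null_sets lebesgue) \<and> {0..1} \<subseteq> \<Union>\<F>"

definition card_eq_covN :: "'i set \<Rightarrow> bool" where
  "card_eq_covN A \<longleftrightarrow> (\<exists>\<F>. null_cover \<F> \<and> A \<approx> \<F> \<and> (\<forall>\<G>. null_cover \<G> \<longrightarrow> \<F> \<lesssim> \<G>))"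

text \<open>Nets of functions [0,1] -> R indexed by A, represented extensionally
(value 0 outside A x [0,1]).\<close>
definition net_alg :: "'i set \<Rightarrow> ('i \<Rightarrow> real \<Rightarrow> real) set" where
  "net_alg A = {F. \<forall>a x. (a \<notin> A \<or> x \<notin> {0..1}) \<longrightarrow> F a x = 0}"

definition ae_net_tendsto :: "'i set \<Rightarrow> ('i \<Rightarrow> 'i \<Rightarrow> bool) \<Rightarrow> ('i \<Rightarrow> real \<Rightarrow> real) \<Rightarrow> (real \<Rightarrow> real) \<Rightarrow> bool" where
  "ae_net_tendsto A le F f \<longleftrightarrow> (AE x in lam01. net_tendsto A le (\<lambda>a. F a x) (f x))"

definition net_tendsto_in_measure :: "'i set \<Rightarrow> ('i \<Rightarrow> 'i \<Rightarrow> bool) \<Rightarrow> ('i \<Rightarrow> real \<Rightarrow> real) \<Rightarrow> (real \<Rightarrow> real) \<Rightarrow> bool" where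
  "net_tendsto_in_measure A le F f \<longleftrightarrow>
     (\<forall>\<epsilon>>0. net_tendsto A le (\<lambda>a. measure lam01 {x\<in>{0..1}. \<epsilon> \<le> \<bar>F a x - f x\<bar>}) 0)"

definition ANM :: "'i set \<Rightarrow> ('i \<Rightarrow> 'i \<Rightarrow> bool) \<Rightarrow> ('i \<Rightarrow> real \<Rightarrow> real) set" where
  "ANM A le = {F. (\<forall>a\<in>A. F a \<in> borel_measurable lam01) \<and>
     (\<exists>f \<in> borel_measurable lam01. ae_net_tendsto A le F f \<and> \<not> net_tendsto_in_measure A le F f)}"

definition ND :: "'i set \<Rightarrow> ('i \<Rightarrow> 'i \<Rightarrow> bool) \<Rightarrow> ('i \<Rightarrow> real \<Rightarrow> real) set" where
  "ND A le = {F. (\<forall>a\<in>A. F a \<in> borel_measurable lam01) \<and>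
     (\<exists>g. integrable lam01 g \<and> (\<forall>a\<in>A. AE x in lam01. \<bar>F a x\<bar> \<le> g x)) \<and>
     (\<exists>f. integrable lam01 f \<and> ae_net_tendsto A le F f \<and>
          \<not> net_tendsto A le (\<lambda>a. LINT x|lam01. \<bar>F a x - f x\<bar>) 0)}"

text \<open>Real polynomials in the variables 0..n-1 without constant term, given by
finitely supported coefficient functions on exponent vectors.\<close>
definition nc_poly :: "nat \<Rightarrow> ((nat \<Rightarrow> nat) \<Rightarrow> real) \<Rightarrow> bool" where
  "nc_poly n c \<longleftrightarrow> finite {\<alpha>. c \<alpha> \<noteq> 0} \<and>
     (\<forall>\<alpha>. c \<alpha> \<noteq> 0 \<longrightarrow> \<alpha> \<noteq> (\<lambda>_. 0) \<and> (\<forall>i\<ge>n. \<alpha> i = 0))"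

definition poly_eval :: "((nat \<Rightarrow> nat) \<Rightarrow> real) \<Rightarrow> nat \<Rightarrow> (nat \<Rightarrow> real) \<Rightarrow> real" where
  "poly_eval c n v = (\<Sum>\<alpha> | c \<alpha> \<noteq> 0. c \<alpha> * (\<Prod>i<n. v i ^ \<alpha> i))"

definition poly_net :: "((nat \<Rightarrow> nat) \<Rightarrow> real) \<Rightarrow> nat \<Rightarrow> (nat \<Rightarrow> 'i \<Rightarrow> real \<Rightarrow> real) \<Rightarrow> 'i \<Rightarrow> real \<Rightarrow> real" where
  "poly_net c n G = (\<lambda>a x. poly_eval c n (\<lambda>i. G i a x))"

text \<open>Strong kappa-algebrability (kappa = cardinality of K) of S inside the algebra Alg
of nets of functions with indexwise pointwise operations.\<close>
definition strongly_algebrable ::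
  "('i \<Rightarrow> real \<Rightarrow> real) set \<Rightarrow> ('i \<Rightarrow> real \<Rightarrow> real) set \<Rightarrow> 'k set \<Rightarrow> bool" where
  "strongly_algebrable Alg S K \<longleftrightarrow> (\<exists>X \<subseteq> Alg. X \<approx> K \<and>
     (\<forall>n G c. inj_on G {..<n} \<and> G ` {..<n} \<subseteq> X \<and> nc_poly n c \<and> c \<noteq> (\<lambda>_. 0)
        \<longrightarrow> poly_net c n G \<noteq> (\<lambda>a x. 0)) \<and>
     (\<forall>n G c. G ` {..<n} \<subseteq> X \<and> nc_poly n c \<and> poly_net c n G \<noteq> (\<lambda>a x. 0)
        \<longrightarrow> poly_net c n G \<in> S))"

end

theory Submission
  imports Defs "HOL-Algebra.Free_Abelian_Groups" "HOL-Real_Asymp.Real_Asymp"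
begin

text \<open>Index the nets by the finite subfamilies of a null cover of [0,1] of minimal size
  \<open>cov(N)\<close>, ordered by inclusion, and let \<open>N a\<close> be the union of the subfamily \<open>a\<close>. The nets
  \<open>G\<^sub>r(a, x) = exp (x powr -r)\<close> off \<open>N a\<close> (and 0 on \<open>N a\<close>), for \<open>r \<ge> 1\<close>, generate a free algebra:
  a polynomial without constant term in them is, off \<open>N a\<close>, an exponential sum
  \<open>\<Sum> C\<^sub>\<mu> exp (\<Sum>\<^sub>v \<mu>\<^sub>v x powr -v)\<close> in which one exponent dominates all others as \<open>x \<rightarrow> 0+\<close>, so it
  grows at least like \<open>K exp (1/x)\<close> unless it vanishes. Every point of [0,1] eventually lies in
  \<open>N a\<close>, so such a net tends to 0 everywhere; but on \<open>(0, \<delta>) - N a\<close>, a set of measure \<open>\<delta>\<close>, it is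
  at least \<open>K\<close>, so it does not tend to 0 in measure, and \<open>exp (1/x)\<close> has no integrable majorant.\<close>

subsection \<open>A directed set of size cov(N) exhausting [0,1] by null sets\<close>

lemma null_cover_singletons: "null_cover ((\<lambda>x. {x}) ` {0..1})"
  unfolding null_cover_def by auto

lemma ex_minimal_null_cover: "\<exists>\<F>. null_cover \<F> \<and> (\<forall>\<G>. null_cover \<G> \<longrightarrow> \<F> \<lesssim> \<G>)"
proof -
  let ?R = "{|\<F>| |\<F>. null_cover \<F>}"
  have "?R \<noteq> {}" using null_cover_singletons by blast
  moreover have "\<forall>r\<in>?R. Card_order r" using card_of_Card_order by blast
  ultimately obtain r where "r \<in> ?R" "\<forall>r'\<in>?R. r \<le>o r'"
    using exists_minim_Card_order[of ?R] by blast
  then obtain \<F> where "null_cover \<F>" "\<forall>\<G>. null_cover \<G> \<longrightarrow> |\<F>| \<le>o |\<G>|" by blast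
  then show ?thesis by (metis card_of_ordLeq lepoll_def)
qed

lemma null_cover_infinite:
  assumes "null_cover \<F>"
  shows "infinite \<F>"
proof
  assume "finite \<F>"
  with assms have "\<Union>\<F> \<in> null_sets lebesgue"
    unfolding null_cover_def by (intro null_sets.finite_Union) auto
  moreover have "{0..1::real} \<subseteq> \<Union>\<F>"
    using assms unfolding null_cover_def by blast
  ultimately have "{0..1::real} \<in> null_sets lebesgue"
    using null_sets_subset[of "\<Union>\<F>" lebesgue "{0..1}"] by simp
  then show False by (simp add: null_sets_def)
qed

lemma directed_set_Fpow: "directed_set (Fpow F) (\<subseteq>)"
  unfolding directed_set_def
proof (intro conjI ballI impI)
  show "Fpow F \<noteq> {}" using empty_in_Fpow by blast
  fix S T assume "S \<in> Fpow F" "T \<in> Fpow F"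
  then show "\<exists>U\<in>Fpow F. S \<subseteq> U \<and> T \<subseteq> U"
    by (intro bexI[of _ "S \<union> T"]) (auto simp: Fpow_def)
qed auto

lemma directed_set_inj_image:
  assumes "directed_set B R" and "inj_on g B"
  shows "directed_set (g ` B) (\<lambda>a b. R (inv_into B g a) (inv_into B g b))"
proof -
  let ?i = "inv_into B g"
  have i: "?i a \<in> B" if "a \<in> g ` B" for a
    using that by (rule inv_into_into)
  have upper_bound: "\<exists>c\<in>g ` B. R (?i a) (?i c) \<and> R (?i b) (?i c)"
    if ab: "a \<in> g ` B" "b \<in> g ` B" for a b
  proof -
    obtain U where U: "U \<in> B" "R (?i a) U" "R (?i b) U"
      using assms(1) i[OF ab(1)] i[OF ab(2)] unfolding directed_set_def by blast
    then have "?i (g U) = U" using assms(2) by (intro inv_into_f_f)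
    with U show ?thesis by (intro bexI[of _ "g U"]) simp_all
  qed
  show ?thesis
    using assms(1) i upper_bound unfolding directed_set_def by blast
qed

lemma Card_order_dir_rel_total:
  assumes "Card_order (dir_rel A R)" and "\<forall>a\<in>A. R a a" and "a \<in> A" "b \<in> A"
  shows "R a b \<or> R b a"
proof -
  have "total_on (Field (dir_rel A R)) (dir_rel A R)"
    using assms(1) unfolding card_order_on_def well_order_on_def linear_order_on_def by blast
  moreover have "a \<in> Field (dir_rel A R)" "b \<in> Field (dir_rel A R)"
    using assms(2-4) unfolding Field_def dir_rel_def by auto
  ultimately show ?thesis
    using assms(2,3) unfolding total_on_def dir_rel_def by (cases "a = b") auto
qed

text \<open>The finite subfamilies of a minimal null cover are transported into the reals along an
  injection, which exists because a minimal cover is no larger than the cover by singletons. Two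
  distinct singleton subfamilies are incomparable, so the order is not a cardinal order.\<close>
lemma obtain_covN_directed_set:
  obtains A :: "real set" and R and N :: "real \<Rightarrow> real set"
  where "directed_set A R" "\<not> Card_order (dir_rel A R)" "card_eq_covN A"
    "\<And>a. a \<in> A \<Longrightarrow> N a \<in> null_sets lebesgue"
    "\<And>x. x \<in> {0..1} \<Longrightarrow> \<exists>a0\<in>A. \<forall>a\<in>A. R a0 a \<longrightarrow> x \<in> N a"
proof -
  obtain \<F> where \<F>: "null_cover \<F>" "\<And>\<G>. null_cover \<G> \<Longrightarrow> \<F> \<lesssim> \<G>"
    using ex_minimal_null_cover by blast
  have inf: "infinite \<F>" using \<F>(1) null_cover_infinite by blast
  define B where "B = Fpow \<F>"
  have "B \<approx> \<F>" unfolding B_def using eqpoll_Fpow[OF inf] .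
  also have "\<F> \<lesssim> (\<lambda>x. {x}) ` {0..1::real}" using \<F>(2) null_cover_singletons by blast
  also have "\<dots> \<lesssim> {0..1::real}" by (rule image_lepoll)
  also have "\<dots> \<lesssim> (UNIV :: real set)" by (rule subset_imp_lepoll) simp
  finally obtain g :: "real set set \<Rightarrow> real" where g: "inj_on g B" unfolding lepoll_def by blast
  define A where "A = g ` B"
  define R where "R a b \<longleftrightarrow> inv_into B g a \<subseteq> inv_into B g b" for a b
  define N where "N a = \<Union>(inv_into B g a)" for a
  have ginv: "inv_into B g (g S) = S" if "S \<in> B" for S using g that by simp
  have dir: "directed_set A R"
    unfolding A_def R_def B_def using directed_set_inj_image[OF directed_set_Fpow g[unfolded B_def]] .
  have not_card: "\<not> Card_order (dir_rel A R)"
  proof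
    assume co: "Card_order (dir_rel A R)"
    obtain M1 where "M1 \<in> \<F>" using infinite_imp_nonempty[OF inf] by blast
    moreover obtain M2 where "M2 \<in> \<F> - {M1}"
      using infinite_imp_nonempty[OF infinite_remove[OF inf]] by blast
    ultimately have M12: "M1 \<in> \<F>" "M2 \<in> \<F>" "M1 \<noteq> M2" by auto
    then have "{M1} \<in> B" "{M2} \<in> B" unfolding B_def Fpow_def by auto
    moreover have "\<forall>a\<in>A. R a a" unfolding R_def by simp
    ultimately have "R (g {M1}) (g {M2}) \<or> R (g {M2}) (g {M1})"
      using Card_order_dir_rel_total[OF co] unfolding A_def by blast
    with \<open>{M1} \<in> B\<close> \<open>{M2} \<in> B\<close> M12(3) show False unfolding R_def by (simp add: ginv)
  qed
  have "A \<approx> \<F>"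
    unfolding A_def using eqpoll_trans[OF inj_on_image_eqpoll_self[OF g] \<open>B \<approx> \<F>\<close>] .
  then have cov: "card_eq_covN A"
    unfolding card_eq_covN_def using \<F> by blast
  have null: "N a \<in> null_sets lebesgue" if "a \<in> A" for a
  proof -
    obtain S where S: "S \<in> B" "a = g S" using \<open>a \<in> A\<close> unfolding A_def by blast
    then have "N a = \<Union>S" unfolding N_def using ginv[OF S(1)] by simp
    moreover have "finite S" "S \<subseteq> \<F>" using S(1) unfolding B_def Fpow_def by auto
    ultimately show ?thesis
      using \<F>(1) unfolding null_cover_def by (metis null_sets.finite_Union subset_iff)
  qed
  have eventually_in: "\<exists>a0\<in>A. \<forall>a\<in>A. R a0 a \<longrightarrow> x \<in> N a" if x: "x \<in> {0..1}" for x
  proof -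
    obtain M where M: "M \<in> \<F>" "x \<in> M" using \<F>(1) x unfolding null_cover_def by blast
    then have "{M} \<in> B" unfolding B_def Fpow_def by auto
    then show ?thesis
      using M unfolding A_def R_def N_def by (intro bexI[of _ "g {M}"]) (auto simp: ginv)
  qed
  show ?thesis by (rule that[OF dir not_card cov null eventually_in])
qed

subsection \<open>Dominant terms of exponential sums\<close>

lemma sum_neg_powr_diverges:
  fixes V :: "real set" and d :: "real \<Rightarrow> real"
  assumes fin: "finite V" and pos: "\<forall>v\<in>V. 0 < v" and nonzero: "\<exists>v\<in>V. d v \<noteq> 0"
  shows "filterlim (\<lambda>x. \<Sum>v\<in>V. d v * x powr -v) at_top (at_right 0) \<or>
         filterlim (\<lambda>x. - (\<Sum>v\<in>V. d v * x powr -v)) at_top (at_right 0)"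
proof -
  define W where "W = {v\<in>V. d v \<noteq> 0}"
  have W: "finite W" "W \<noteq> {}" using fin nonzero unfolding W_def by auto
  define w where "w = Max W"
  have "w \<in> W" using W unfolding w_def by simp
  then have w: "0 < w" "d w \<noteq> 0" "w \<in> V" using pos unfolding W_def by auto
  have pos_right: "eventually (\<lambda>x::real. 0 < x) (at_right 0)"
    by (simp add: eventually_at_right_less)
  text \<open>Factor out the leading power: the cofactor tends to the leading coefficient.\<close>
  have "((\<lambda>x. \<Sum>v\<in>V. d v * x powr (w - v)) \<longlongrightarrow> (\<Sum>v\<in>V. if v = w then d w else 0)) (at_right 0)"
  proof (rule tendsto_sum)
    fix v assume "v \<in> V"
    show "((\<lambda>x. d v * x powr (w - v)) \<longlongrightarrow> (if v = w then d w else 0)) (at_right 0)"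
    proof (cases "v = w \<or> d v = 0")
      case True
      have "eventually (\<lambda>x. d v * x powr (w - v) = (if v = w then d w else 0)) (at_right 0)"
        using pos_right
      proof (rule eventually_mono)
        fix x :: real assume "0 < x"
        with True show "d v * x powr (w - v) = (if v = w then d w else 0)" by auto
      qed
      then show ?thesis by (rule tendsto_eventually)
    next
      case False
      with \<open>v \<in> V\<close> have "v \<in> W" unfolding W_def by auto
      then have "v \<le> w" using W unfolding w_def by simp
      with False have "v < w" by simp
      then have "((\<lambda>x::real. x powr (w - v)) \<longlongrightarrow> 0) (at_right 0)" by real_asymp
      from tendsto_mult_left[OF this, of "d v"] show ?thesis using False by simp
    qed
  qed
  moreover have "(\<Sum>v\<in>V. if v = w then d w else 0) = d w" using fin w(3) by simp
  ultimately have lead: "((\<lambda>x. \<Sum>v\<in>V. d v * x powr (w - v)) \<longlongrightarrow> d w) (at_right 0)" by simp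
  have blowup: "filterlim (\<lambda>x::real. x powr (-w)) at_top (at_right 0)"
    using w(1) by real_asymp
  have factor: "eventually (\<lambda>x. (\<Sum>v\<in>V. d v * x powr -v) = (\<Sum>v\<in>V. d v * x powr (w - v)) * x powr (-w))
      (at_right 0)"
    using pos_right
  proof eventually_elim
    case (elim x)
    have "(\<Sum>v\<in>V. d v * x powr (w - v)) * x powr (-w) = (\<Sum>v\<in>V. d v * (x powr (w - v) * x powr (-w)))"
      by (simp add: sum_distrib_right mult.assoc)
    also have "\<dots> = (\<Sum>v\<in>V. d v * x powr -v)"
      using elim by (simp add: powr_add[symmetric])
    finally show ?case by simp
  qed
  show ?thesis
  proof (cases "d w > 0")
    case True
    have "filterlim (\<lambda>x. (\<Sum>v\<in>V. d v * x powr (w - v)) * x powr (-w)) at_top (at_right 0)"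
      by (rule filterlim_tendsto_pos_mult_at_top[OF lead True blowup])
    then show ?thesis using filterlim_cong[OF refl refl factor] by simp
  next
    case False
    then have "- d w > 0" using w(2) by simp
    have "eventually (\<lambda>x. - (\<Sum>v\<in>V. d v * x powr -v)
        = (- (\<Sum>v\<in>V. d v * x powr (w - v))) * x powr (-w)) (at_right 0)"
      using factor by eventually_elim simp
    then have "filterlim (\<lambda>x. - (\<Sum>v\<in>V. d v * x powr -v)) at_top (at_right 0)
        = filterlim (\<lambda>x. (- (\<Sum>v\<in>V. d v * x powr (w - v))) * x powr (-w)) at_top (at_right 0)"
      by (rule filterlim_cong[OF refl refl])
    moreover have "filterlim (\<lambda>x. (- (\<Sum>v\<in>V. d v * x powr (w - v))) * x powr (-w)) at_top (at_right 0)"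
      by (rule filterlim_tendsto_pos_mult_at_top[OF tendsto_minus[OF lead] \<open>- d w > 0\<close> blowup])
    ultimately show ?thesis by simp
  qed
qed

text \<open>The dominant exponent is one of maximal value at a point where every divergent difference
  is already positive.\<close>
lemma ex_dominant_exponent:
  fixes E :: "'a \<Rightarrow> 'b \<Rightarrow> real"
  assumes "finite M" "M \<noteq> {}" "F \<noteq> bot"
    and diverge: "\<And>\<mu> \<nu>. \<mu> \<in> M \<Longrightarrow> \<nu> \<in> M \<Longrightarrow> \<mu> \<noteq> \<nu> \<Longrightarrow>
      filterlim (\<lambda>x. E \<mu> x - E \<nu> x) at_top F \<or> filterlim (\<lambda>x. E \<nu> x - E \<mu> x) at_top F"
  shows "\<exists>\<mu>0\<in>M. \<forall>\<nu>\<in>M - {\<mu>0}. filterlim (\<lambda>x. E \<mu>0 x - E \<nu> x) at_top F"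
proof -
  define P where "P x \<longleftrightarrow> (\<forall>\<mu>\<in>M. \<forall>\<nu>\<in>M.
    filterlim (\<lambda>x. E \<mu> x - E \<nu> x) at_top F \<longrightarrow> E \<nu> x < E \<mu> x)" for x
  have "eventually P F"
    unfolding P_def
  proof (intro eventually_ball_finite \<open>finite M\<close> ballI)
    fix \<mu> \<nu>
    show "eventually (\<lambda>x. filterlim (\<lambda>x. E \<mu> x - E \<nu> x) at_top F \<longrightarrow> E \<nu> x < E \<mu> x) F"
    proof (cases "filterlim (\<lambda>x. E \<mu> x - E \<nu> x) at_top F")
      case True
      then have "eventually (\<lambda>x. 0 < E \<mu> x - E \<nu> x) F"
        unfolding filterlim_at_top_dense by blast
      then show ?thesis by eventually_elim simp
    qed simp
  qed
  then obtain x0 where x0: "P x0" using eventually_happens'[OF \<open>F \<noteq> bot\<close>] by blast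
  obtain \<mu>0 where \<mu>0: "\<mu>0 \<in> M" "\<And>\<nu>. \<nu> \<in> M \<Longrightarrow> E \<nu> x0 \<le> E \<mu>0 x0"
  proof -
    have "Max ((\<lambda>\<mu>. E \<mu> x0) ` M) \<in> (\<lambda>\<mu>. E \<mu> x0) ` M"
      using \<open>finite M\<close> \<open>M \<noteq> {}\<close> by simp
    then obtain \<mu>0 where "\<mu>0 \<in> M" "E \<mu>0 x0 = Max ((\<lambda>\<mu>. E \<mu> x0) ` M)" by auto
    with \<open>finite M\<close> show ?thesis by (intro that) auto
  qed
  have "filterlim (\<lambda>x. E \<mu>0 x - E \<nu> x) at_top F" if \<nu>: "\<nu> \<in> M - {\<mu>0}" for \<nu>
  proof -
    have "\<not> filterlim (\<lambda>x. E \<nu> x - E \<mu>0 x) at_top F"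
    proof
      assume "filterlim (\<lambda>x. E \<nu> x - E \<mu>0 x) at_top F"
      then have "E \<mu>0 x0 < E \<nu> x0" using x0 \<nu> \<mu>0(1) unfolding P_def by blast
      with \<mu>0(2)[of \<nu>] \<nu> show False by simp
    qed
    then show ?thesis using diverge[of \<mu>0 \<nu>] \<nu> \<mu>0(1) by blast
  qed
  with \<mu>0(1) show ?thesis by blast
qed

lemma exp_sum_dominant_tendsto:
  fixes E :: "'a \<Rightarrow> 'b \<Rightarrow> real"
  assumes "finite M" "\<mu>0 \<in> M"
    and dominant: "\<forall>\<nu>\<in>M - {\<mu>0}. filterlim (\<lambda>x. E \<mu>0 x - E \<nu> x) at_top F"
  shows "((\<lambda>x. (\<Sum>\<mu>\<in>M. C \<mu> * exp (E \<mu> x)) * exp (- E \<mu>0 x)) \<longlongrightarrow> C \<mu>0) F"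
proof -
  have eq: "(\<Sum>\<mu>\<in>M. C \<mu> * exp (E \<mu> x)) * exp (- E \<mu>0 x)
      = C \<mu>0 + (\<Sum>\<nu>\<in>M - {\<mu>0}. C \<nu> * exp (- (E \<mu>0 x - E \<nu> x)))" for x
  proof -
    have "(\<Sum>\<mu>\<in>M. C \<mu> * exp (E \<mu> x)) * exp (- E \<mu>0 x) = (\<Sum>\<nu>\<in>M. C \<nu> * exp (- (E \<mu>0 x - E \<nu> x)))"
      by (simp add: sum_distrib_right mult.assoc exp_add[symmetric])
    also have "\<dots> = C \<mu>0 + (\<Sum>\<nu>\<in>M - {\<mu>0}. C \<nu> * exp (- (E \<mu>0 x - E \<nu> x)))"
      using assms(1,2) by (simp add: sum.remove)
    finally show ?thesis .
  qed
  have "((\<lambda>x. C \<mu>0 + (\<Sum>\<nu>\<in>M - {\<mu>0}. C \<nu> * exp (- (E \<mu>0 x - E \<nu> x))))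
      \<longlongrightarrow> C \<mu>0 + (\<Sum>\<nu>\<in>M - {\<mu>0}. C \<nu> * 0)) F"
  proof (intro tendsto_add tendsto_const tendsto_sum tendsto_mult)
    fix \<nu> assume "\<nu> \<in> M - {\<mu>0}"
    then have "filterlim (\<lambda>x. - (E \<mu>0 x - E \<nu> x)) at_bot F"
      using dominant unfolding filterlim_uminus_at_bot by simp
    then show "((\<lambda>x. exp (- (E \<mu>0 x - E \<nu> x))) \<longlongrightarrow> 0) F"
      by (rule filterlim_compose[OF exp_at_bot])
  qed
  then show ?thesis by (simp add: eq)
qed

subsection \<open>Polynomials in the functions exp (x powr -s)\<close>

definition exp_poly :: "(nat \<Rightarrow> real) \<Rightarrow> ((nat \<Rightarrow> nat) \<Rightarrow> real) \<Rightarrow> nat \<Rightarrow> real \<Rightarrow> real" where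
  "exp_poly s c n x = poly_eval c n (\<lambda>i. exp (x powr (- s i)))"

text \<open>The monomial with exponent vector \<open>\<alpha>\<close> evaluates to \<open>exp (\<Sum>v. \<mu> v * x powr -v)\<close>, where
  \<open>\<mu> = exponent_weight s n \<alpha>\<close> collects the degrees of the variables sharing the same \<open>s i\<close>;
  \<open>merged_coeff\<close> adds up the coefficients of the monomials with the same \<open>\<mu>\<close>.\<close>
definition exponent_weight :: "(nat \<Rightarrow> real) \<Rightarrow> nat \<Rightarrow> (nat \<Rightarrow> nat) \<Rightarrow> real \<Rightarrow> nat" where
  "exponent_weight s n \<alpha> v = (\<Sum>i | i < n \<and> s i = v. \<alpha> i)"

definition weighted_powr_sum :: "(nat \<Rightarrow> real) \<Rightarrow> nat \<Rightarrow> (real \<Rightarrow> nat) \<Rightarrow> real \<Rightarrow> real" where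
  "weighted_powr_sum s n \<mu> x = (\<Sum>v\<in>s ` {..<n}. real (\<mu> v) * x powr (- v))"

definition merged_coeff ::
  "(nat \<Rightarrow> real) \<Rightarrow> nat \<Rightarrow> ((nat \<Rightarrow> nat) \<Rightarrow> real) \<Rightarrow> (real \<Rightarrow> nat) \<Rightarrow> real" where
  "merged_coeff s n c \<mu> = (\<Sum>\<alpha> | c \<alpha> \<noteq> 0 \<and> exponent_weight s n \<alpha> = \<mu>. c \<alpha>)"

lemma prod_exp_powr_eq:
  "(\<Prod>i<n. exp (x powr (- s i)) ^ \<alpha> i) = exp (weighted_powr_sum s n (exponent_weight s n \<alpha>) x)"
proof -
  have "(\<Prod>i<n. exp (x powr (- s i)) ^ \<alpha> i) = exp (\<Sum>i<n. real (\<alpha> i) * x powr (- s i))"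
    by (simp add: exp_sum exp_of_nat_mult)
  also have "(\<Sum>i<n. real (\<alpha> i) * x powr (- s i)) =
      (\<Sum>v\<in>s ` {..<n}. \<Sum>i\<in>{i\<in>{..<n}. s i = v}. real (\<alpha> i) * x powr (- s i))"
    by (rule sum.image_gen) simp
  also have "\<dots> = weighted_powr_sum s n (exponent_weight s n \<alpha>) x"
    unfolding weighted_powr_sum_def exponent_weight_def
  proof (intro sum.cong refl)
    fix v
    have "(\<Sum>i\<in>{i\<in>{..<n}. s i = v}. real (\<alpha> i) * x powr (- s i))
        = (\<Sum>i | i < n \<and> s i = v. real (\<alpha> i) * x powr (- v))"
      by (rule sum.cong) auto
    then show "(\<Sum>i\<in>{i\<in>{..<n}. s i = v}. real (\<alpha> i) * x powr (- s i))
        = real (\<Sum>i | i < n \<and> s i = v. \<alpha> i) * x powr (- v)"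
      by (simp add: sum_distrib_right)
  qed
  finally show ?thesis .
qed

lemma exp_poly_eq_merged_sum:
  assumes "finite {\<alpha>. c \<alpha> \<noteq> 0}"
  shows "exp_poly s c n x = (\<Sum>\<mu>\<in>exponent_weight s n ` {\<alpha>. c \<alpha> \<noteq> 0}.
    merged_coeff s n c \<mu> * exp (weighted_powr_sum s n \<mu> x))"
proof -
  have "exp_poly s c n x
      = (\<Sum>\<alpha> | c \<alpha> \<noteq> 0. c \<alpha> * exp (weighted_powr_sum s n (exponent_weight s n \<alpha>) x))"
    unfolding exp_poly_def poly_eval_def by (simp add: prod_exp_powr_eq)
  also have "\<dots> = (\<Sum>\<mu>\<in>exponent_weight s n ` {\<alpha>. c \<alpha> \<noteq> 0}.
      \<Sum>\<alpha> | c \<alpha> \<noteq> 0 \<and> exponent_weight s n \<alpha> = \<mu>. c \<alpha> * exp (weighted_powr_sum s n \<mu> x))"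
    by (subst sum.image_gen[OF assms]) (auto intro!: sum.cong)
  also have "\<dots> = (\<Sum>\<mu>\<in>exponent_weight s n ` {\<alpha>. c \<alpha> \<noteq> 0}.
      merged_coeff s n c \<mu> * exp (weighted_powr_sum s n \<mu> x))"
    unfolding merged_coeff_def by (simp add: sum_distrib_right)
  finally show ?thesis .
qed

lemma exponent_weight_outside: "v \<notin> s ` {..<n} \<Longrightarrow> exponent_weight s n \<alpha> v = 0"
  unfolding exponent_weight_def by (rule sum.neutral) auto

lemma weighted_powr_sum_diff_diverges:
  assumes pos: "\<forall>i<n. 0 < s i" and "\<mu> \<noteq> \<nu>"
    and "\<mu> = exponent_weight s n \<alpha>" "\<nu> = exponent_weight s n \<beta>"
  shows "filterlim (\<lambda>x. weighted_powr_sum s n \<mu> x - weighted_powr_sum s n \<nu> x) at_top (at_right 0) \<or>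
         filterlim (\<lambda>x. weighted_powr_sum s n \<nu> x - weighted_powr_sum s n \<mu> x) at_top (at_right 0)"
proof -
  define d where "d v = real (\<mu> v) - real (\<nu> v)" for v
  have "\<exists>v\<in>s ` {..<n}. d v \<noteq> 0"
  proof (rule ccontr)
    assume "\<not> ?thesis"
    then have "\<mu> v = \<nu> v" for v
      using assms(3,4) exponent_weight_outside unfolding d_def by (cases "v \<in> s ` {..<n}") auto
    with \<open>\<mu> \<noteq> \<nu>\<close> show False by blast
  qed
  moreover have "finite (s ` {..<n})" "\<forall>v\<in>s ` {..<n}. 0 < v" using pos by auto
  moreover have diff: "weighted_powr_sum s n \<mu> x - weighted_powr_sum s n \<nu> x
      = (\<Sum>v\<in>s ` {..<n}. d v * x powr -v)" for x
    unfolding weighted_powr_sum_def d_def by (simp add: sum_subtractf[symmetric] algebra_simps)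
  moreover have "weighted_powr_sum s n \<nu> x - weighted_powr_sum s n \<mu> x
      = - (\<Sum>v\<in>s ` {..<n}. d v * x powr -v)" for x
    using diff[of x] by linarith
  ultimately show ?thesis
    using sum_neg_powr_diverges[of "s ` {..<n}" d] by presburger
qed

lemma inverse_le_weighted_powr_sum:
  assumes s: "\<forall>i<n. 1 \<le> s i" and \<alpha>: "\<alpha> i \<noteq> 0" "i < n" and x: "0 < x" "x < 1"
  shows "1 / x \<le> weighted_powr_sum s n (exponent_weight s n \<alpha>) x"
proof -
  have "\<alpha> i \<le> exponent_weight s n \<alpha> (s i)"
    unfolding exponent_weight_def by (rule member_le_sum) (use \<alpha>(2) in auto)
  with \<alpha>(1) have "1 \<le> real (exponent_weight s n \<alpha> (s i))" by simp
  moreover have "1 / x \<le> x powr (- s i)"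
  proof -
    have "1 / x = x powr (-1)" using x by (simp add: powr_minus_divide)
    also have "\<dots> \<le> x powr (- s i)" using x s \<alpha>(2) by (intro powr_mono') auto
    finally show ?thesis .
  qed
  ultimately have "1 / x \<le> real (exponent_weight s n \<alpha> (s i)) * x powr (- s i)"
    using mult_right_mono[of 1 "real (exponent_weight s n \<alpha> (s i))" "x powr (- s i)"] by simp
  also have "\<dots> \<le> weighted_powr_sum s n (exponent_weight s n \<alpha>) x"
    unfolding weighted_powr_sum_def using \<alpha>(2) by (intro member_le_sum) auto
  finally show ?thesis .
qed

lemma exp_poly_growth:
  assumes nc: "nc_poly n c" and s: "\<forall>i<n. 1 \<le> s i"
    and nonzero: "\<exists>\<mu>\<in>exponent_weight s n ` {\<alpha>. c \<alpha> \<noteq> 0}. merged_coeff s n c \<mu> \<noteq> 0"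
  shows "\<exists>\<delta>>0. \<exists>K>0. \<forall>x. 0 < x \<and> x < \<delta> \<longrightarrow> K * exp (1 / x) \<le> \<bar>exp_poly s c n x\<bar>"
proof -
  let ?W = "exponent_weight s n" and ?E = "weighted_powr_sum s n" and ?C = "merged_coeff s n c"
  define M where "M = {\<mu> \<in> ?W ` {\<alpha>. c \<alpha> \<noteq> 0}. ?C \<mu> \<noteq> 0}"
  have fin: "finite {\<alpha>. c \<alpha> \<noteq> 0}" using nc unfolding nc_poly_def by simp
  then have M: "finite M" "M \<noteq> {}" using nonzero unfolding M_def by auto
  have sum_M: "exp_poly s c n x = (\<Sum>\<mu>\<in>M. ?C \<mu> * exp (?E \<mu> x))" for x
    unfolding exp_poly_eq_merged_sum[OF fin] M_def
    by (rule sum.mono_neutral_right) (use fin in auto)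
  have "\<forall>i<n. 0 < s i" using s by (meson less_le_trans zero_less_one)
  then have diverge: "filterlim (\<lambda>x. ?E \<mu> x - ?E \<nu> x) at_top (at_right 0) \<or>
      filterlim (\<lambda>x. ?E \<nu> x - ?E \<mu> x) at_top (at_right 0)"
    if "\<mu> \<in> M" "\<nu> \<in> M" "\<mu> \<noteq> \<nu>" for \<mu> \<nu>
    using that weighted_powr_sum_diff_diverges unfolding M_def by blast
  have "\<exists>\<mu>0\<in>M. \<forall>\<nu>\<in>M - {\<mu>0}. filterlim (\<lambda>x. ?E \<mu>0 x - ?E \<nu> x) at_top (at_right 0)"
    by (rule ex_dominant_exponent[OF M trivial_limit_at_right_real diverge])
  then obtain \<mu>0 where \<mu>0: "\<mu>0 \<in> M"
    "\<forall>\<nu>\<in>M - {\<mu>0}. filterlim (\<lambda>x. ?E \<mu>0 x - ?E \<nu> x) at_top (at_right 0)" ..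
  obtain \<alpha>0 i where "\<mu>0 = ?W \<alpha>0" "\<alpha>0 i \<noteq> 0" "i < n"
  proof -
    obtain \<alpha>0 where \<alpha>0: "c \<alpha>0 \<noteq> 0" "\<mu>0 = ?W \<alpha>0" using \<mu>0(1) unfolding M_def by auto
    from \<alpha>0(1) obtain i where "\<alpha>0 i \<noteq> 0" "i < n"
      using nc unfolding nc_poly_def by (metis not_le)
    with \<alpha>0(2) show ?thesis by (rule that)
  qed
  define C0 where "C0 = ?C \<mu>0"
  have "C0 \<noteq> 0" using \<mu>0(1) unfolding C0_def M_def by simp
  have "((\<lambda>x. exp_poly s c n x * exp (- ?E \<mu>0 x)) \<longlongrightarrow> C0) (at_right 0)"
    using exp_sum_dominant_tendsto[OF M(1) \<mu>0] unfolding sum_M C0_def .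
  then have "eventually (\<lambda>x. \<bar>C0\<bar> / 2 < \<bar>exp_poly s c n x * exp (- ?E \<mu>0 x)\<bar>) (at_right 0)"
    by (rule order_tendstoD(1)[OF tendsto_rabs]) (use \<open>C0 \<noteq> 0\<close> in simp)
  moreover have "eventually (\<lambda>x::real. 0 < x \<and> x < 1) (at_right 0)"
    using eventually_at_right_real[of 0 1] by simp
  ultimately have "eventually (\<lambda>x. \<bar>C0\<bar> / 2 * exp (1 / x) \<le> \<bar>exp_poly s c n x\<bar>) (at_right 0)"
  proof eventually_elim
    case (elim x)
    then have "1 / x \<le> ?E \<mu>0 x"
      using inverse_le_weighted_powr_sum[OF s] \<open>\<mu>0 = ?W \<alpha>0\<close> \<open>\<alpha>0 i \<noteq> 0\<close> \<open>i < n\<close> by simp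
    then have "\<bar>C0\<bar> / 2 * exp (1 / x) \<le> \<bar>C0\<bar> / 2 * exp (?E \<mu>0 x)"
      by (intro mult_left_mono) auto
    also have "\<dots> \<le> \<bar>exp_poly s c n x * exp (- ?E \<mu>0 x)\<bar> * exp (?E \<mu>0 x)"
      using elim(1) by simp
    also have "\<dots> = \<bar>exp_poly s c n x\<bar>"
      by (simp add: abs_mult exp_minus)
    finally show ?case .
  qed
  then obtain \<delta> where \<delta>: "0 < \<delta>"
    and bound: "\<And>x. 0 < x \<Longrightarrow> x < \<delta> \<Longrightarrow> \<bar>C0\<bar> / 2 * exp (1 / x) \<le> \<bar>exp_poly s c n x\<bar>"
    unfolding eventually_at_right[OF zero_less_one] by auto
  have "0 < \<bar>C0\<bar> / 2" using \<open>C0 \<noteq> 0\<close> by simp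
  with \<delta> bound show ?thesis by blast
qed

lemma merged_coeff_nonzero_if_exp_poly_nonzero:
  assumes "nc_poly n c" and "exp_poly s c n x \<noteq> 0"
  shows "\<exists>\<mu>\<in>exponent_weight s n ` {\<alpha>. c \<alpha> \<noteq> 0}. merged_coeff s n c \<mu> \<noteq> 0"
proof (rule ccontr)
  assume all_zero: "\<not> ?thesis"
  have "finite {\<alpha>. c \<alpha> \<noteq> 0}" using assms(1) unfolding nc_poly_def by simp
  then have "exp_poly s c n x = (\<Sum>\<mu>\<in>exponent_weight s n ` {\<alpha>. c \<alpha> \<noteq> 0}.
      merged_coeff s n c \<mu> * exp (weighted_powr_sum s n \<mu> x))"
    by (rule exp_poly_eq_merged_sum)
  also have "\<dots> = 0" using all_zero by (intro sum.neutral) auto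
  finally show False using assms(2) by simp
qed

text \<open>For distinct exponents \<open>s i\<close> no two monomials merge, so the merged coefficients are the
  original ones.\<close>
lemma merged_coeff_nonzero_if_inj:
  assumes nc: "nc_poly n c" and inj: "inj_on s {..<n}" and "c \<noteq> (\<lambda>_. 0)"
  shows "\<exists>\<mu>\<in>exponent_weight s n ` {\<alpha>. c \<alpha> \<noteq> 0}. merged_coeff s n c \<mu> \<noteq> 0"
proof -
  obtain \<alpha>0 where "c \<alpha>0 \<noteq> 0" using \<open>c \<noteq> (\<lambda>_. 0)\<close> by auto
  have weight_at: "exponent_weight s n \<beta> (s i) = \<beta> i" if "i < n" for \<beta> i
  proof -
    have "{j. j < n \<and> s j = s i} = {i}" using inj that by (auto dest: inj_onD)
    then show ?thesis unfolding exponent_weight_def by simp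
  qed
  have "\<alpha> = \<alpha>0" if "c \<alpha> \<noteq> 0" "exponent_weight s n \<alpha> = exponent_weight s n \<alpha>0" for \<alpha>
  proof
    fix i
    show "\<alpha> i = \<alpha>0 i"
    proof (cases "i < n")
      case True
      then show ?thesis using that(2) weight_at[of i \<alpha>] weight_at[of i \<alpha>0] by simp
    next
      case False
      then show ?thesis using nc that(1) \<open>c \<alpha>0 \<noteq> 0\<close> unfolding nc_poly_def by (metis not_less)
    qed
  qed
  then have "{\<alpha>. c \<alpha> \<noteq> 0 \<and> exponent_weight s n \<alpha> = exponent_weight s n \<alpha>0} = {\<alpha>0}"
    using \<open>c \<alpha>0 \<noteq> 0\<close> by blast
  then have "merged_coeff s n c (exponent_weight s n \<alpha>0) = c \<alpha>0"
    unfolding merged_coeff_def by simp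
  then show ?thesis using \<open>c \<alpha>0 \<noteq> 0\<close> by auto
qed

lemma measure_Ioo_diff_null:
  assumes N: "N \<in> null_sets lebesgue" and "0 < \<delta>" "\<delta> \<le> 1"
  shows "{0<..<\<delta>} - N \<in> sets lam01" "measure lam01 ({0<..<\<delta>} - N) = \<delta>"
proof -
  have sub: "{0<..<\<delta>} - N \<subseteq> {0..1}" using assms by auto
  have "{0<..<\<delta>} - N \<in> sets lebesgue" using N by auto
  then show "{0<..<\<delta>} - N \<in> sets lam01"
    using sub by (simp add: sets_restrict_space_iff)
  have "measure lebesgue ({0<..<\<delta>} - N) = measure lebesgue {0<..<\<delta>}"
    by (rule measure_Diff_null_set[OF _ N]) simp
  also have "\<dots> = \<delta>" using assms by simp
  finally show "measure lam01 ({0<..<\<delta>} - N) = \<delta>"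
    using sub \<open>{0<..<\<delta>} - N \<in> sets lebesgue\<close> by (simp add: measure_restrict_space)
qed

lemma ex_Ioo_not_in_null:
  assumes "N \<in> null_sets lebesgue" and "0 < (\<delta>::real)"
  shows "\<exists>x. 0 < x \<and> x < \<delta> \<and> x \<notin> N"
proof (rule ccontr)
  assume "\<not> ?thesis"
  then have "{0<..<min \<delta> 1} - N = {}" by auto
  then have "measure lam01 ({0<..<min \<delta> 1} - N) = 0" by (simp only: measure_empty)
  then show False
    using measure_Ioo_diff_null(2)[OF assms(1), of "min \<delta> 1"] assms(2) by simp
qed

lemma exp_inverse_ge:
  assumes "(t::real) > 0"
  shows "1 / (16 * t^2) \<le> exp (1 / (2 * t))"
proof -
  have "1 / (4 * t) \<le> exp (1 / (4 * t))" using exp_ge_add_one_self[of "1 / (4 * t)"] by linarith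
  then have "(1 / (4 * t))^2 \<le> exp (1 / (4 * t))^2" using assms by (intro power_mono) auto
  also have "exp (1 / (4 * t))^2 = exp (1 / (2 * t))"
    by (simp add: exp_double[symmetric] field_simps)
  finally show ?thesis by (simp add: power2_eq_square field_simps)
qed

text \<open>On \<open>[t, 2 t]\<close> such an \<open>f\<close> is at least \<open>K / (16 t^2)\<close>, so any integrable majorant has integral
  at least \<open>K / (16 t)\<close>, which is unbounded as \<open>t \<rightarrow> 0\<close>.\<close>
lemma not_integrable_exp_growth_majorant:
  assumes "0 < \<delta>" "0 < K" and N: "N \<in> null_sets lebesgue"
    and growth: "\<And>x. 0 < x \<Longrightarrow> x < \<delta> \<Longrightarrow> x \<le> 1 \<Longrightarrow> x \<notin> N \<Longrightarrow> K * exp (1 / x) \<le> \<bar>f x\<bar>"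
    and major: "AE x in lam01. \<bar>f x\<bar> \<le> g x"
  shows "\<not> integrable lam01 g"
proof
  assume g: "integrable lam01 g"
  define I where "I = integral\<^sup>L lam01 g"
  define t where "t = min (\<delta> / 4) (min (1 / 4) (K / (16 * (\<bar>I\<bar> + 1))))"
  have "0 < K / (16 * (\<bar>I\<bar> + 1))" using \<open>0 < K\<close> by (simp add: add_pos_nonneg)
  then have "0 < t" unfolding t_def using \<open>0 < \<delta>\<close> by simp
  moreover have "t \<le> \<delta> / 4" "t \<le> 1 / 4" "t \<le> K / (16 * (\<bar>I\<bar> + 1))"
    unfolding t_def by linarith+
  ultimately have t: "0 < t" "2 * t < \<delta>" "2 * t \<le> 1" "16 * t * (\<bar>I\<bar> + 1) \<le> K"
    by (simp_all add: pos_le_divide_eq algebra_simps)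
  define L where "L = K / (16 * t^2)"
  have "AE x in lam01. x \<notin> N"
  proof -
    have "N \<inter> {0..1} \<in> null_sets lam01"
      using N by (auto simp: null_sets_restrict_space intro: null_set_Int2)
    from AE_not_in[OF this] show ?thesis by (rule AE_mp) auto
  qed
  with major have "AE x in lam01. L * indicator {t..2 * t} x \<le> g x"
  proof eventually_elim
    case (elim x)
    show ?case
    proof (cases "x \<in> {t..2 * t}")
      case True
      then have x: "0 < x" "x < \<delta>" "x \<le> 1" "1 / (2 * t) \<le> 1 / x"
        using t by (auto simp: frac_le)
      have "L \<le> K * exp (1 / (2 * t))"
        unfolding L_def using exp_inverse_ge[OF t(1)] \<open>0 < K\<close> by (simp add: divide_le_eq mult_left_mono)
      also have "\<dots> \<le> K * exp (1 / x)" using x(4) \<open>0 < K\<close> by simp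
      also have "\<dots> \<le> g x" using growth[OF x(1-3)] elim by simp
      finally show ?thesis using True by simp
    next
      case False
      then show ?thesis using elim(1) by simp
    qed
  qed
  moreover have "{t..2 * t} \<in> sets lam01" "measure lam01 {t..2 * t} = t"
    using t by (auto simp: sets_restrict_space_iff measure_restrict_space)
  moreover have "emeasure lam01 {t..2 * t} < \<infinity>"
    using t by (simp add: emeasure_restrict_space emeasure_lborel_Icc_eq)
  ultimately have "integral\<^sup>L lam01 (\<lambda>x. L * indicator {t..2 * t} x) \<le> I"
    unfolding I_def by (intro integral_mono_AE g) (simp_all add: integrable_real_indicator)
  moreover have "integral\<^sup>L lam01 (\<lambda>x. L * indicator {t..2 * t} x) = L * t"
    using \<open>measure lam01 {t..2 * t} = t\<close> t by (simp add: Int_absorb2 del: space_lebesgue_on)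
  moreover have "L * t = K / (16 * t)"
    unfolding L_def using t by (simp add: power2_eq_square field_simps)
  moreover have "\<bar>I\<bar> + 1 \<le> K / (16 * t)"
    using t by (simp add: field_simps)
  ultimately show False by linarith
qed

subsection \<open>Nets cut off on null sets\<close>

lemma exp_poly_measurable: "exp_poly s c n \<in> borel_measurable lam01"
proof -
  have "exp_poly s c n \<in> borel_measurable borel"
    unfolding exp_poly_def poly_eval_def by measurable
  then have "exp_poly s c n \<in> borel_measurable lebesgue"
    by (intro measurable_completion) simp
  then show ?thesis by (rule measurable_restrict_space1)
qed

lemma cut_off_null_measurable:
  fixes f :: "real \<Rightarrow> real"
  assumes "f \<in> borel_measurable lam01" and "N \<in> null_sets lebesgue"
  shows "(\<lambda>x. if 0 < x \<and> x \<le> 1 \<and> x \<notin> N then f x else 0) \<in> borel_measurable lam01"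
proof -
  have "{0<..1} - N \<in> sets lam01"
    using assms(2) by (auto simp: sets_restrict_space_iff)
  then have "(\<lambda>x. indicator ({0<..1} - N) x * f x) \<in> borel_measurable lam01"
    using assms(1) by measurable
  moreover have "(\<lambda>x. indicator ({0<..1} - N) x * f x)
      = (\<lambda>x. if 0 < x \<and> x \<le> 1 \<and> x \<notin> N then f x else 0)"
    by (auto simp: indicator_def)
  ultimately show ?thesis by simp
qed

lemma ae_net_tendsto_zero_if_eventually_zero:
  assumes "\<And>x. x \<in> {0..1} \<Longrightarrow> \<exists>a0\<in>A. \<forall>a\<in>A. R a0 a \<longrightarrow> F a x = 0"
  shows "ae_net_tendsto A R F (\<lambda>x. 0)"
  unfolding ae_net_tendsto_def
proof (rule AE_I2)
  fix x assume "x \<in> space lam01"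
  then have "x \<in> {0..1}" by simp
  from assms[OF this] obtain a0 where "a0 \<in> A" "\<forall>a\<in>A. R a0 a \<longrightarrow> F a x = 0" ..
  then show "net_tendsto A R (\<lambda>a. F a x) 0"
    unfolding net_tendsto_def by (metis (no_types, lifting))
qed

lemma not_net_tendsto_in_measure_zero:
  assumes "directed_set A R" and meas: "\<And>a. a \<in> A \<Longrightarrow> F a \<in> borel_measurable lam01"
    and null: "\<And>a. a \<in> A \<Longrightarrow> N a \<in> null_sets lebesgue"
    and "0 < \<delta>" "\<delta> \<le> 1" "0 < K"
    and large: "\<And>a x. a \<in> A \<Longrightarrow> 0 < x \<Longrightarrow> x < \<delta> \<Longrightarrow> x \<notin> N a \<Longrightarrow> K \<le> \<bar>F a x\<bar>"
  shows "\<not> net_tendsto_in_measure A R F (\<lambda>x. 0)"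
proof
  assume "net_tendsto_in_measure A R F (\<lambda>x. 0)"
  then have "net_tendsto A R (\<lambda>a. measure lam01 {x\<in>{0..1}. K \<le> \<bar>F a x - 0\<bar>}) 0"
    unfolding net_tendsto_in_measure_def using \<open>0 < K\<close> by blast
  moreover have "open {..<\<delta>}" "0 \<in> {..<\<delta>}" using \<open>0 < \<delta>\<close> by auto
  ultimately have "\<exists>a0\<in>A. \<forall>a\<in>A. R a0 a \<longrightarrow>
      measure lam01 {x\<in>{0..1}. K \<le> \<bar>F a x - 0\<bar>} \<in> {..<\<delta>}"
    unfolding net_tendsto_def by blast
  then obtain a0 where a0: "a0 \<in> A"
    "\<forall>a\<in>A. R a0 a \<longrightarrow> measure lam01 {x\<in>{0..1}. K \<le> \<bar>F a x - 0\<bar>} \<in> {..<\<delta>}" ..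
  have "R a0 a0" using assms(1) a0(1) unfolding directed_set_def by blast
  then have "measure lam01 {x\<in>{0..1}. K \<le> \<bar>F a0 x\<bar>} < \<delta>" using a0 by simp
  moreover have "{x\<in>space lam01. K \<le> \<bar>F a0 x\<bar>} \<in> sets lam01"
    using meas[OF a0(1)] by measurable
  then have "measure lam01 ({0<..<\<delta>} - N a0) \<le> measure lam01 {x\<in>{0..1}. K \<le> \<bar>F a0 x\<bar>}"
    using large[OF a0(1)] \<open>\<delta> \<le> 1\<close>
    by (intro finite_measure.finite_measure_mono finite_measure_lebesgue_on) auto
  ultimately show False
    using measure_Ioo_diff_null(2)[OF null[OF a0(1)] \<open>0 < \<delta>\<close> \<open>\<delta> \<le> 1\<close>] by simp
qed

lemma poly_eval_zero:
  assumes "nc_poly n c"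
  shows "poly_eval c n (\<lambda>i. 0) = 0"
  unfolding poly_eval_def
proof (intro sum.neutral ballI)
  fix \<alpha> assume "\<alpha> \<in> {\<alpha>. c \<alpha> \<noteq> 0}"
  then have "\<alpha> \<noteq> (\<lambda>_. 0)" "\<forall>i\<ge>n. \<alpha> i = 0" using assms unfolding nc_poly_def by auto
  then obtain i where "i < n" "\<alpha> i \<noteq> 0" by (metis ext not_le)
  then have "(\<Prod>i<n. (0::real) ^ \<alpha> i) = 0" by (intro prod_zero) auto
  then show "c \<alpha> * (\<Prod>i<n. 0 ^ \<alpha> i) = 0" by simp
qed

lemma poly_eval_cong: "(\<And>i. i < n \<Longrightarrow> v i = w i) \<Longrightarrow> poly_eval c n v = poly_eval c n w"
  unfolding poly_eval_def by (intro sum.cong refl prod.cong) auto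

definition exp_net :: "'i set \<Rightarrow> ('i \<Rightarrow> real set) \<Rightarrow> real \<Rightarrow> 'i \<Rightarrow> real \<Rightarrow> real" where
  "exp_net A N r a x = (if a \<in> A \<and> 0 < x \<and> x \<le> 1 \<and> x \<notin> N a then exp (x powr (- r)) else 0)"

lemma poly_net_exp_net:
  assumes "nc_poly n c" and "\<And>i. i < n \<Longrightarrow> G i = exp_net A N (s i)"
  shows "poly_net c n G a x = (if a \<in> A \<and> 0 < x \<and> x \<le> 1 \<and> x \<notin> N a then exp_poly s c n x else 0)"
proof (cases "a \<in> A \<and> 0 < x \<and> x \<le> 1 \<and> x \<notin> N a")
  case True
  then show ?thesis
    unfolding poly_net_def exp_poly_def using assms(2)
    by (simp add: exp_net_def cong: poly_eval_cong)
next
  case False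
  then have "poly_net c n G a x = poly_eval c n (\<lambda>i. 0)"
    unfolding poly_net_def by (intro poly_eval_cong) (auto simp: assms(2) exp_net_def)
  with False show ?thesis using poly_eval_zero[OF assms(1)] by (simp only: if_False)
qed

lemma inj_on_exp_net:
  assumes "a \<in> A" and "N a \<in> null_sets lebesgue"
  shows "inj_on (exp_net A N) {1..}"
proof (rule inj_onI)
  fix r r' assume "exp_net A N r = exp_net A N r'"
  moreover obtain x where x: "0 < x" "x < 1" "x \<notin> N a"
    using ex_Ioo_not_in_null[OF assms(2) zero_less_one] by blast
  ultimately have "exp_net A N r a x = exp_net A N r' a x" by simp
  then have "x powr (- r) = x powr (- r')" using x assms(1) by (simp add: exp_net_def)
  then show "r = r'" using x by (simp add: powr_inj)
qed

lemma atLeast_eqpoll_UNIV: "{1::real..} \<approx> (UNIV :: real set)"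
proof (rule lepoll_antisym)
  show "{1::real..} \<lesssim> (UNIV :: real set)" by (rule subset_imp_lepoll) simp
  show "(UNIV :: real set) \<lesssim> {1::real..}"
    unfolding lepoll_def by (rule exI[of _ "\<lambda>x. exp x + 1"]) (auto simp: inj_on_def)
qed

lemma cut_off_net_in_ANM_minus_ND:
  fixes N :: "'i \<Rightarrow> real set"
  assumes dir: "directed_set A R"
    and null: "\<And>a. a \<in> A \<Longrightarrow> N a \<in> null_sets lebesgue"
    and exhaust: "\<And>x. x \<in> {0..1} \<Longrightarrow> \<exists>a0\<in>A. \<forall>a\<in>A. R a0 a \<longrightarrow> x \<in> N a"
    and F: "\<And>a x. F a x = (if a \<in> A \<and> 0 < x \<and> x \<le> 1 \<and> x \<notin> N a then f x else 0)"
    and f: "f \<in> borel_measurable lam01"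
    and "0 < \<delta>" "0 < K" and growth: "\<And>x. 0 < x \<Longrightarrow> x < \<delta> \<Longrightarrow> K * exp (1 / x) \<le> \<bar>f x\<bar>"
  shows "F \<in> ANM A R - ND A R"
proof -
  have meas: "F a \<in> borel_measurable lam01" if "a \<in> A" for a
  proof -
    have "F a = (\<lambda>x. if 0 < x \<and> x \<le> 1 \<and> x \<notin> N a then f x else 0)"
      using that by (auto simp: F)
    then show ?thesis using cut_off_null_measurable[OF f null[OF that]] by simp
  qed
  have "ae_net_tendsto A R F (\<lambda>x. 0)"
  proof (rule ae_net_tendsto_zero_if_eventually_zero)
    fix x :: real assume "x \<in> {0..1}"
    then obtain a0 where "a0 \<in> A" "\<forall>a\<in>A. R a0 a \<longrightarrow> x \<in> N a" using exhaust by blast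
    then show "\<exists>a0\<in>A. \<forall>a\<in>A. R a0 a \<longrightarrow> F a x = 0" by (auto simp: F)
  qed
  moreover have "\<not> net_tendsto_in_measure A R F (\<lambda>x. 0)"
  proof (rule not_net_tendsto_in_measure_zero[OF dir meas null])
    fix a x assume "a \<in> A" "0 < x" "x < min \<delta> 1" "x \<notin> N a"
    then have "K \<le> K * exp (1 / x)" "K * exp (1 / x) \<le> \<bar>F a x\<bar>"
      using \<open>0 < K\<close> growth by (simp_all add: F)
    then show "K \<le> \<bar>F a x\<bar>" by linarith
  qed (use \<open>0 < \<delta>\<close> \<open>0 < K\<close> in auto)
  ultimately have "F \<in> ANM A R"
    unfolding ANM_def using meas by auto
  moreover have "F \<notin> ND A R"
  proof
    assume "F \<in> ND A R"
    then obtain g where g: "integrable lam01 g" "\<forall>a\<in>A. AE x in lam01. \<bar>F a x\<bar> \<le> g x"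
      unfolding ND_def by blast
    obtain a1 where "a1 \<in> A" using dir unfolding directed_set_def by auto
    have "\<not> integrable lam01 g"
    proof (rule not_integrable_exp_growth_majorant[OF \<open>0 < \<delta>\<close> \<open>0 < K\<close> null[OF \<open>a1 \<in> A\<close>]])
      show "AE x in lam01. \<bar>F a1 x\<bar> \<le> g x" using g(2) \<open>a1 \<in> A\<close> by blast
      fix x assume "0 < x" "x < \<delta>" "x \<le> 1" "x \<notin> N a1"
      then show "K * exp (1 / x) \<le> \<bar>F a1 x\<bar>" using growth \<open>a1 \<in> A\<close> by (simp add: F)
    qed
    with g(1) show False by simp
  qed
  ultimately show ?thesis by blast
qed

lemma poly_net_exp_net_in_ANM_minus_ND:
  fixes N :: "'i \<Rightarrow> real set"
  assumes dir: "directed_set A R"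
    and null: "\<And>a. a \<in> A \<Longrightarrow> N a \<in> null_sets lebesgue"
    and exhaust: "\<And>x. x \<in> {0..1} \<Longrightarrow> \<exists>a0\<in>A. \<forall>a\<in>A. R a0 a \<longrightarrow> x \<in> N a"
    and nc: "nc_poly n c" and s: "\<forall>i<n. 1 \<le> s i"
    and G: "\<And>i. i < n \<Longrightarrow> G i = exp_net A N (s i)"
    and nonzero: "poly_net c n G \<noteq> (\<lambda>a x. 0)"
  shows "poly_net c n G \<in> ANM A R - ND A R"
proof -
  note F = poly_net_exp_net[OF nc G]
  obtain a x where "poly_net c n G a x \<noteq> 0" using nonzero by metis
  then have "exp_poly s c n x \<noteq> 0" by (simp add: F split: if_splits)
  then have "\<exists>\<delta>>0. \<exists>K>0. \<forall>x. 0 < x \<and> x < \<delta> \<longrightarrow> K * exp (1 / x) \<le> \<bar>exp_poly s c n x\<bar>"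
    by (intro exp_poly_growth[OF nc s] merged_coeff_nonzero_if_exp_poly_nonzero[OF nc])
  then obtain \<delta> K where "0 < \<delta>" "0 < K"
    and growth: "\<And>x. 0 < x \<Longrightarrow> x < \<delta> \<Longrightarrow> K * exp (1 / x) \<le> \<bar>exp_poly s c n x\<bar>"
    by blast
  show ?thesis
    using cut_off_net_in_ANM_minus_ND[OF dir null exhaust F exp_poly_measurable \<open>0 < \<delta>\<close> \<open>0 < K\<close> growth] .
qed

lemma poly_net_exp_net_nonzero:
  assumes "a \<in> A" "N a \<in> null_sets lebesgue"
    and nc: "nc_poly n c" and "c \<noteq> (\<lambda>_. 0)"
    and s: "\<forall>i<n. 1 \<le> s i" "inj_on s {..<n}"
    and G: "\<And>i. i < n \<Longrightarrow> G i = exp_net A N (s i)"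
  shows "poly_net c n G \<noteq> (\<lambda>a x. 0)"
proof -
  have "\<exists>\<delta>>0. \<exists>K>0. \<forall>x. 0 < x \<and> x < \<delta> \<longrightarrow> K * exp (1 / x) \<le> \<bar>exp_poly s c n x\<bar>"
    using exp_poly_growth[OF nc s(1) merged_coeff_nonzero_if_inj[OF nc s(2) \<open>c \<noteq> (\<lambda>_. 0)\<close>]] .
  then obtain \<delta> K where "0 < \<delta>" "0 < K"
    and growth: "\<And>x. 0 < x \<Longrightarrow> x < \<delta> \<Longrightarrow> K * exp (1 / x) \<le> \<bar>exp_poly s c n x\<bar>"
    by blast
  obtain x where x: "0 < x" "x < min \<delta> 1" "x \<notin> N a"
    using ex_Ioo_not_in_null[OF assms(2), of "min \<delta> 1"] \<open>0 < \<delta>\<close> by auto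
  have "0 < K * exp (1 / x)" using \<open>0 < K\<close> by simp
  also have "\<dots> \<le> \<bar>poly_net c n G a x\<bar>"
    using growth x \<open>a \<in> A\<close> by (simp add: poly_net_exp_net[OF nc G])
  finally show ?thesis by auto
qed

lemma strongly_algebrable_ANM_minus_ND:
  fixes N :: "'i \<Rightarrow> real set"
  assumes dir: "directed_set A R"
    and null: "\<And>a. a \<in> A \<Longrightarrow> N a \<in> null_sets lebesgue"
    and exhaust: "\<And>x. x \<in> {0..1} \<Longrightarrow> \<exists>a0\<in>A. \<forall>a\<in>A. R a0 a \<longrightarrow> x \<in> N a"
  shows "strongly_algebrable (net_alg A) (ANM A R - ND A R) (UNIV :: real set)"
proof -
  define X where "X = exp_net A N ` {1..}"
  obtain a1 where "a1 \<in> A" using dir unfolding directed_set_def by auto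
  have exponents: "\<exists>s. \<forall>i<n. 1 \<le> s i \<and> G i = exp_net A N (s i)" if "G ` {..<n} \<subseteq> X" for n G
  proof -
    have "\<forall>i. \<exists>r. i < n \<longrightarrow> 1 \<le> r \<and> G i = exp_net A N r" using that unfolding X_def by force
    then show ?thesis by metis
  qed
  have "X \<approx> {1::real..}"
    unfolding X_def
    by (rule inj_on_image_eqpoll_self[OF inj_on_exp_net[of a1 A N, OF \<open>a1 \<in> A\<close> null[OF \<open>a1 \<in> A\<close>]]])
  then have "X \<approx> (UNIV :: real set)" using atLeast_eqpoll_UNIV by (rule eqpoll_trans)
  moreover have "X \<subseteq> net_alg A" unfolding X_def net_alg_def exp_net_def by auto
  ultimately show ?thesis
    unfolding strongly_algebrable_def
  proof (intro exI[of _ X] conjI allI impI)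
    fix n G c
    assume asm: "inj_on G {..<n} \<and> G ` {..<n} \<subseteq> X \<and> nc_poly n c \<and> c \<noteq> (\<lambda>_. 0)"
    then have "\<exists>s. \<forall>i<n. 1 \<le> s i \<and> G i = exp_net A N (s i)" by (intro exponents) simp
    then obtain s where s: "\<forall>i<n. 1 \<le> s i \<and> G i = exp_net A N (s i)" ..
    with asm have "inj_on s {..<n}" unfolding inj_on_def by (metis lessThan_iff)
    with s asm show "poly_net c n G \<noteq> (\<lambda>a x. 0)"
      by (intro poly_net_exp_net_nonzero[of a1 A N, OF \<open>a1 \<in> A\<close> null[OF \<open>a1 \<in> A\<close>]]) simp_all
  next
    fix n G c
    assume asm: "G ` {..<n} \<subseteq> X \<and> nc_poly n c \<and> poly_net c n G \<noteq> (\<lambda>a x. 0)"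
    then have "\<exists>s. \<forall>i<n. 1 \<le> s i \<and> G i = exp_net A N (s i)" by (intro exponents) simp
    then obtain s where "\<forall>i<n. 1 \<le> s i \<and> G i = exp_net A N (s i)" ..
    with asm show "poly_net c n G \<in> ANM A R - ND A R"
      by (intro poly_net_exp_net_in_ANM_minus_ND[OF dir null exhaust]) simp_all
  qed
qed

theorem mainTheorem3:
  shows "\<exists>(A :: real set) le. directed_set A le \<and> \<not> Card_order (dir_rel A le) \<and>
     card_eq_covN A \<and>
     strongly_algebrable (net_alg A) (ANM A le - ND A le) (UNIV :: real set)"
proof (rule obtain_covN_directed_set)
  fix A :: "real set" and R and N :: "real \<Rightarrow> real set"
  assume "directed_set A R" "\<not> Card_order (dir_rel A R)" "card_eq_covN A"
    and "\<And>a. a \<in> A \<Longrightarrow> N a \<in> null_sets lebesgue"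
    and "\<And>x. x \<in> {0..1} \<Longrightarrow> \<exists>a0\<in>A. \<forall>a\<in>A. R a0 a \<longrightarrow> x \<in> N a"
  moreover from this(1,4,5) have "strongly_algebrable (net_alg A) (ANM A R - ND A R) (UNIV :: real set)"
    by (rule strongly_algebrable_ANM_minus_ND)
  ultimately show ?thesis by blast
qed

end
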